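(* Let $b_x,b_y,u_x,u_y,K,\beta$ be positive constants with $u_y>u_x$ and $b_x\geq b_y$, let $h>0$, and set \[ \phi_1(h)=\frac{b_y\left\{1-\exp\left(-\frac{\beta K u_y}{b_y}h\right)\right\}}{\beta K u_y},\qquad \phi_2(h)=h . \] Consider the discrete system \[ X_{n+1}=\frac{X_n(1+\phi_1(h)b_x)}{1+\phi_1(h)\left(\frac{b_x}{K}X_n+\frac{b_x}{K}Y_n+u_x+\beta Y_n\right)},\qquad Y_{n+1}=\frac{Y_n\{1+\phi_2(h)(b_y+\beta X_n)\}}{1+\phi_2(h)\left(\frac{b_y}{K}X_n+\frac{b_y}{K}Y_n+u_y\right)} . \] Let $\bar X=K(1-u_x/b_x)$, $\bar Y=K(1-u_y/b_y)$, $R_0=\frac{b_y}{b_x}\frac{u_x}{u_y}+\frac{\beta}{u_y}\bar X$, and $E_H^*=(X_H^*,Y_H^* )$ with \[ X_H^*=\frac{b_xu_y-b_yu_x-\beta K(b_y-u_y)}{\beta(\beta K+b_x-b_y)},\qquad Y_H^*=\frac{b_yu_x-b_xu_y+\beta K(b_x-u_x)}{\beta(\beta K+b_x-b_y)} . \] Then, for every $h>0$, the system is locally asymptotically stable around the fixed point (i) $E_0^H=(0,0)$ if $b_x<u_x$ and $b_y<u_y$; (ii) $E_1^H=(\bar X,0)$ if $b_x>u_x$ and $R_0<1$; (iii) $E_2^H=(0,\bar Y)$ if $b_y>u_y$ and $\frac{b_xu_y}{b_y}<u_x+\beta K\left(1-\frac{u_y}{b_y}\right)$; (iv) $E_H^*$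 if $b_x>u_x$, $b_y>u_y$, $\frac{b_xu_y}{b_y}>u_x+\beta K\left(1-\frac{u_y}{b_y}\right)$ and $R_0>1$.
   Context: This is a nonstandard finite-difference discretization (step size $h$) of a host–parasite model with horizontal and perfect vertical transmission; $X,Y$ are uninfected and infected host densities, $b_x,b_y$ birth rates, $u_x,u_y$ death rates, $K$ carrying capacity, $\beta$ transmission coefficient. The paper assumes throughout that $u_y>u_x$ and $b_x\geq b_y$. A fixed point of the map is called (locally asymptotically) stable if both eigenvalues of the Jacobian of the map at the fixed point have modulus strictly less than $1$. *)

theory Defs
  imports "HOL-Analysis.Analysis"
begin

definition phi1 :: "real \<Rightarrow> real \<Rightarrow> real \<Rightarrow> real \<Rightarrow> real \<Rightarrow> real" where
  "phi1 b_y u_y K \<beta> h = b_y * (1 - exp (- (\<beta> * K * u_y / b_y) * h)) / (\<beta> * K * u_y)"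

definition phi2 :: "real \<Rightarrow> real" where
  "phi2 h = h"

definition hp_map ::
  "real \<Rightarrow> real \<Rightarrow> real \<Rightarrow> real \<Rightarrow> real \<Rightarrow> real \<Rightarrow> real \<Rightarrow> real \<times> real \<Rightarrow> real \<times> real" where
  "hp_map b_x b_y u_x u_y K \<beta> h = (\<lambda>(X, Y).
     (X * (1 + phi1 b_y u_y K \<beta> h * b_x) /
        (1 + phi1 b_y u_y K \<beta> h * (b_x / K * X + b_x / K * Y + u_x + \<beta> * Y)),
      Y * (1 + phi2 h * (b_y + \<beta> * X)) /
        (1 + phi2 h * (b_y / K * X + b_y / K * Y + u_y))))"

definition eigenvalues2 :: "real \<Rightarrow> real \<Rightarrow> real \<Rightarrow> real \<Rightarrow> complex set" where
  "eigenvalues2 a11 a12 a21 a22 =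
     {z. (of_real a11 - z) * (of_real a22 - z) - of_real a12 * of_real a21 = 0}"

text \<open>p is a locally asymptotically stable fixed point of F: F p = p, F is differentiable
  at p, and both eigenvalues of the Jacobian at p have modulus < 1.  The Jacobian
  is the matrix of the Frechet derivative D: column j is D applied to the j-th unit vector.\<close>
definition stable_fixed_point :: "(real \<times> real \<Rightarrow> real \<times> real) \<Rightarrow> real \<times> real \<Rightarrow> bool" where
  "stable_fixed_point F p \<longleftrightarrow> F p = p \<and>
     (\<exists>D. (F has_derivative D) (at p) \<and>
        (\<forall>z\<in>eigenvalues2 (fst (D (1, 0))) (fst (D (0, 1))) (snd (D (1, 0))) (snd (D (0, 1))).
           cmod z < 1))"

end

theory Submission
  imports Defs
begin

(* Both components of the map have the Kolmogorov form  x * f(x, y),  y * g(x, y)  with  f, g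
   ratios of affine functions.  At a fixed point on an axis the Jacobian is triangular, and each
   diagonal entry is either a growth factor, which lies in (0,1) exactly under the stated invasion
   condition, or 1 minus a number in (0,1).  At the endemic point f = g = 1 and the Jacobian is
   I - M with M of positive diagonal; by the Jury criterion (det < 1 and the characteristic
   polynomial positive at 1 and -1) stability reduces to one polynomial inequality, which holds for
   every step size because phi1(h) * beta * K * u_y < b_y. *)

definition linear2 :: "real \<Rightarrow> real \<Rightarrow> real \<Rightarrow> real \<Rightarrow> real \<times> real \<Rightarrow> real \<times> real" where
  "linear2 a11 a12 a21 a22 = (\<lambda>(dx, dy). (a11 * dx + a12 * dy, a21 * dx + a22 * dy))"

definition jury_conditions :: "real \<Rightarrow> real \<Rightarrow> real \<Rightarrow> real \<Rightarrow> bool" where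
  "jury_conditions a11 a12 a21 a22 \<longleftrightarrow>
     (let tr = a11 + a22; det = a11 * a22 - a12 * a21
      in det < 1 \<and> 1 - tr + det > 0 \<and> 1 + tr + det > 0)"

lemma jury_conditions_imp_cmod_less_1:
  assumes "jury_conditions a11 a12 a21 a22" "z \<in> eigenvalues2 a11 a12 a21 a22"
  shows "cmod z < 1"
proof -
  define tr det where "tr = a11 + a22" and "det = a11 * a22 - a12 * a21"
  have jury: "det < 1" "1 - tr + det > 0" "1 + tr + det > 0"
    using assms(1) by (simp_all add: jury_conditions_def tr_def det_def Let_def)
  obtain x y where z: "z = Complex x y"
    by (cases z)
  have "(of_real a11 - z) * (of_real a22 - z) - of_real a12 * of_real a21 = 0"
    using assms(2) by (simp add: eigenvalues2_def)
  from arg_cong[OF this, of Re] arg_cong[OF this, of Im]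
  have re: "x * x - tr * x + det = y * y" and im: "y * (tr - 2 * x) = 0"
    by (simp_all add: z tr_def det_def algebra_simps)
  show ?thesis
  proof (cases "y = 0")
    case False
    with im have "tr = 2 * x"
      by simp
    with re have "x * x + y * y = det"
      by (simp add: algebra_simps)
    with jury show ?thesis
      by (simp add: z cmod_def power2_eq_square)
  next
    case True
    define w where "w = tr - x"
    have det: "det = x * w" and tr: "tr = x + w"
      using re True by (simp_all add: w_def algebra_simps)
    have "(1 - x) * (1 - w) > 0" "(1 + x) * (1 + w) > 0"
      using jury by (simp_all add: det tr algebra_simps)
    with jury(1) det have "\<bar>x\<bar> < 1"
      by (smt (verit, ccfv_SIG) less_1_mult mult_cancel_right1 mult_diff_mult zero_less_mult_iff)
    then show ?thesis
      by (simp add: z True cmod_def)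
  qed
qed

lemma jury_conditions_triangular:
  assumes "a12 * a21 = 0" "\<bar>a11\<bar> < 1" "\<bar>a22\<bar> < 1"
  shows "jury_conditions a11 a12 a21 a22"
proof -
  have "\<bar>a11 * a22\<bar> < 1"
    using abs_mult_less[OF assms(2,3)] by (simp add: abs_mult)
  moreover have "(1 - a11) * (1 - a22) > 0" "(1 + a11) * (1 + a22) > 0"
    using assms(2,3) by (simp_all add: abs_less_iff)
  ultimately show ?thesis
    unfolding jury_conditions_def Let_def assms(1) by (simp add: algebra_simps)
qed

lemma jury_conditions_positive_diagonal:
  assumes "0 < a11" "0 < a22"
    and "0 < (1 - a11) * (1 - a22) - a12 * a21"
    and "(1 - a11) * (1 - a22) - a12 * a21 < (1 - a11) + (1 - a22)"
  shows "jury_conditions a11 a12 a21 a22"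
  using assms by (simp add: jury_conditions_def algebra_simps)

lemma stable_fixed_pointI:
  assumes "F p = p" "(F has_derivative linear2 a11 a12 a21 a22) (at p)"
    and "jury_conditions a11 a12 a21 a22"
  shows "stable_fixed_point F p"
  unfolding stable_fixed_point_def
  using assms jury_conditions_imp_cmod_less_1 by (auto simp: linear2_def)

lemma linear_fractional_has_derivative:
  fixes p px py q qx qy x y :: real
  defines "d \<equiv> q + qx * x + qy * y"
  defines "r \<equiv> (p + px * x + py * y) / d"
  assumes "d \<noteq> 0"
  shows "((\<lambda>(x, y). (p + px * x + py * y) / (q + qx * x + qy * y)) has_derivative
           (\<lambda>(dx, dy). (px - r * qx) / d * dx + (py - r * qy) / d * dy)) (at (x, y))"
  unfolding case_prod_beta'
  apply (rule has_derivative_eq_rhs)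
   apply (auto intro!: derivative_eq_intros simp: assms(3)[unfolded d_def])[1]
  apply (simp only: d_def[symmetric] fst_conv snd_conv)
  using assms(3) apply (simp add: fun_eq_iff r_def field_simps power2_eq_square)
  done

lemma kolmogorov_map_has_derivative:
  assumes "(f has_derivative (\<lambda>(dx, dy). fx * dx + fy * dy)) (at (x, y))"
    and "(g has_derivative (\<lambda>(dx, dy). gx * dx + gy * dy)) (at (x, y))"
  shows "((\<lambda>(x, y). (x * f (x, y), y * g (x, y))) has_derivative
           linear2 (f (x, y) + x * fx) (x * fy) (y * gx) (g (x, y) + y * gy)) (at (x, y))"
  unfolding case_prod_beta' linear2_def
  apply (rule has_derivative_eq_rhs)
   apply (auto intro!: derivative_eq_intros assms[unfolded case_prod_beta'])[1]
  apply (simp add: fun_eq_iff algebra_simps)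
  done

lemma product_ratio_bounds:
  fixes z s d K :: real
  assumes "0 < z" "z < K" "0 < s" "s < d"
  shows "0 < z * s / (K * d)" "z * s / (K * d) < 1"
proof -
  have "z * s < K * d"
    using assms by (intro mult_strict_mono) auto
  then show "z * s / (K * d) < 1"
    using assms by (simp add: divide_less_eq_1)
  show "0 < z * s / (K * d)"
    using assms by simp
qed

lemma endemic_polynomial_inequality:
  fixes b_x b_y u_y K \<beta> x y :: real
  assumes "0 < b_x" "0 < b_y" "0 < \<beta>" "0 < x" "0 < y" "x + y < K"
    and equilibrium: "b_y * (K - x - y) + \<beta> * x * K = u_y * K" and "u_y < b_y"
  shows "\<beta> * (\<beta> * K + b_x - b_y) * x * y
           < b_x * x * (b_y + \<beta> * x) + b_x * b_y * y + \<beta> * K * u_y * y"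
proof -
  have "0 < K"
    using assms(4-6) by linarith
  then have "u_y * K < b_y * K"
    using \<open>u_y < b_y\<close> by simp
  then have "\<beta> * x * K < b_y * (x + y)"
    using equilibrium by (simp add: algebra_simps)
  then have "0 < b_x * (b_y * (x + y) - \<beta> * x * K) + \<beta> * b_x * x * (K + x - y)
                 + \<beta> * b_y * (K - y) * y"
    using assms(1-6) by (intro add_pos_pos mult_pos_pos) auto
  also have "\<dots> = b_x * x * (b_y + \<beta> * x) + b_x * b_y * y + \<beta> * y * (u_y * K)
                   - \<beta> * (\<beta> * K + b_x - b_y) * x * y"
    unfolding equilibrium[symmetric] by (simp add: algebra_simps)
  finally show ?thesis
    by (simp add: algebra_simps)
qed

lemma endemic_equilibrium:
  fixes b_x b_y u_x u_y K \<beta> :: real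
  defines "x \<equiv> (b_x * u_y - b_y * u_x - \<beta> * K * (b_y - u_y)) / (\<beta> * (\<beta> * K + b_x - b_y))"
    and "y \<equiv> (b_y * u_x - b_x * u_y + \<beta> * K * (b_x - u_x)) / (\<beta> * (\<beta> * K + b_x - b_y))"
  assumes "0 < \<beta>" "b_y < \<beta> * K + b_x"
  shows "b_x * (K - x - y) = K * (u_x + \<beta> * y)"
    and "b_y * (K - x - y) + \<beta> * x * K = u_y * K"
proof -
  define d where "d = \<beta> * (\<beta> * K + b_x - b_y)"
  have "d \<noteq> 0"
    using assms(3,4) by (simp add: d_def)
  have xd: "x * d = b_x * u_y - b_y * u_x - \<beta> * K * (b_y - u_y)"
    and yd: "y * d = b_y * u_x - b_x * u_y + \<beta> * K * (b_x - u_x)"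
    using \<open>d \<noteq> 0\<close> unfolding x_def y_def d_def by simp_all
  have "b_x * (K - x - y) * d = b_x * (K * d - x * d - y * d)"
    by (simp add: algebra_simps)
  also have "\<dots> = K * (u_x * d + \<beta> * (y * d))"
    unfolding xd yd by (simp add: d_def algebra_simps)
  also have "\<dots> = K * (u_x + \<beta> * y) * d"
    by (simp add: algebra_simps)
  finally show "b_x * (K - x - y) = K * (u_x + \<beta> * y)"
    using \<open>d \<noteq> 0\<close> by simp
  have "(b_y * (K - x - y) + \<beta> * x * K) * d = b_y * (K * d - x * d - y * d) + \<beta> * (x * d) * K"
    by (simp add: algebra_simps)
  also have "\<dots> = u_y * K * d"
    unfolding xd yd by (simp add: d_def algebra_simps)
  finally show "b_y * (K - x - y) + \<beta> * x * K = u_y * K"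
    using \<open>d \<noteq> 0\<close> by simp
qed

lemma endemic_equilibrium_pos:
  fixes b_x b_y u_x u_y K \<beta> :: real
  defines "x \<equiv> (b_x * u_y - b_y * u_x - \<beta> * K * (b_y - u_y)) / (\<beta> * (\<beta> * K + b_x - b_y))"
    and "y \<equiv> (b_y * u_x - b_x * u_y + \<beta> * K * (b_x - u_x)) / (\<beta> * (\<beta> * K + b_x - b_y))"
  assumes "0 < b_x" "0 < b_y" "0 < u_y" "0 < \<beta>" "b_y < \<beta> * K + b_x"
    and "u_x + \<beta> * K * (1 - u_y / b_y) < b_x * u_y / b_y"
    and "1 < b_y / b_x * (u_x / u_y) + \<beta> / u_y * K * (1 - u_x / b_x)"
  shows "0 < x" "0 < y"
proof -
  have "b_x * u_y - b_y * u_x - \<beta> * K * (b_y - u_y)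
          = b_y * (b_x * u_y / b_y - (u_x + \<beta> * K * (1 - u_y / b_y)))"
    and "b_y * u_x - b_x * u_y + \<beta> * K * (b_x - u_x)
          = b_x * u_y * (b_y / b_x * (u_x / u_y) + \<beta> / u_y * K * (1 - u_x / b_x) - 1)"
    using assms(3-5) by (simp_all add: field_simps)
  with assms(3-9) show "0 < x" "0 < y"
    unfolding x_def y_def by simp_all
qed

locale nsfd_host_parasite =
  fixes b_x b_y u_x u_y K \<beta> h :: real
  assumes b_x_pos: "0 < b_x" and b_y_pos: "0 < b_y" and u_x_pos: "0 < u_x"
    and u_y_pos: "0 < u_y" and K_pos: "0 < K" and \<beta>_pos: "0 < \<beta>" and h_pos: "0 < h"
begin

abbreviation F :: "real \<times> real \<Rightarrow> real \<times> real" where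
  "F \<equiv> hp_map b_x b_y u_x u_y K \<beta> h"

definition \<phi> :: real where
  "\<phi> = phi1 b_y u_y K \<beta> h"

lemma \<phi>_pos: "0 < \<phi>"
  using b_y_pos u_y_pos K_pos \<beta>_pos h_pos
  by (simp add: \<phi>_def phi1_def field_simps)

lemma \<phi>_bound: "\<phi> * (\<beta> * K * u_y) < b_y"
  using b_y_pos u_y_pos K_pos \<beta>_pos
  by (simp add: \<phi>_def phi1_def field_simps)

definition host_denom :: "real \<times> real \<Rightarrow> real" where
  "host_denom = (\<lambda>(x, y). 1 + \<phi> * u_x + \<phi> * b_x / K * x + \<phi> * (b_x / K + \<beta>) * y)"

definition parasite_denom :: "real \<times> real \<Rightarrow> real" where
  "parasite_denom = (\<lambda>(x, y). 1 + h * u_y + h * b_y / K * x + h * b_y / K * y)"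

definition host_growth :: "real \<times> real \<Rightarrow> real" where
  "host_growth p = (1 + \<phi> * b_x) / host_denom p"

definition parasite_growth :: "real \<times> real \<Rightarrow> real" where
  "parasite_growth p = (1 + h * b_y + h * \<beta> * fst p) / parasite_denom p"

lemma hp_map_eq: "F = (\<lambda>(x, y). (x * host_growth (x, y), y * parasite_growth (x, y)))"
  by (auto simp: fun_eq_iff hp_map_def phi2_def host_growth_def parasite_growth_def
      host_denom_def parasite_denom_def \<phi>_def algebra_simps)

lemma denoms_pos:
  assumes "0 \<le> x" "0 \<le> y"
  shows "0 < host_denom (x, y)" "0 < parasite_denom (x, y)"
  using assms \<phi>_pos b_x_pos u_x_pos K_pos \<beta>_pos b_y_pos u_y_pos h_pos
  by (simp_all add: host_denom_def parasite_denom_def add_pos_nonneg)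

lemma growths_pos:
  assumes "0 \<le> x" "0 \<le> y"
  shows "0 < host_growth (x, y)" "0 < parasite_growth (x, y)"
  using denoms_pos[OF assms] assms \<phi>_pos b_x_pos b_y_pos \<beta>_pos h_pos
  by (simp_all add: host_growth_def parasite_growth_def add_pos_nonneg)

lemma host_denom_minus_numerator:
  "host_denom (x, y) - (1 + \<phi> * b_x) = \<phi> / K * (K * (u_x + \<beta> * y) - b_x * (K - x - y))"
  using K_pos by (simp add: host_denom_def field_simps)

lemma parasite_denom_minus_numerator:
  "parasite_denom (x, y) - (1 + h * b_y + h * \<beta> * x)
     = h / K * (u_y * K - (b_y * (K - x - y) + \<beta> * x * K))"
  using K_pos by (simp add: parasite_denom_def field_simps)

lemma host_growth_less_1_iff:
  assumes "0 \<le> x" "0 \<le> y"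
  shows "host_growth (x, y) < 1 \<longleftrightarrow> b_x * (K - x - y) < K * (u_x + \<beta> * y)"
proof -
  have "host_growth (x, y) < 1 \<longleftrightarrow> 0 < host_denom (x, y) - (1 + \<phi> * b_x)"
    using denoms_pos[OF assms] by (simp add: host_growth_def divide_less_eq_1_pos)
  also have "\<dots> \<longleftrightarrow> b_x * (K - x - y) < K * (u_x + \<beta> * y)"
    using \<phi>_pos K_pos
    by (simp add: host_denom_minus_numerator zero_less_divide_iff zero_less_mult_iff)
  finally show ?thesis .
qed

lemma host_growth_eq_1_iff:
  assumes "0 \<le> x" "0 \<le> y"
  shows "host_growth (x, y) = 1 \<longleftrightarrow> b_x * (K - x - y) = K * (u_x + \<beta> * y)"
proof -
  have "host_growth (x, y) = 1 \<longleftrightarrow> host_denom (x, y) - (1 + \<phi> * b_x) = 0"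
    using denoms_pos[OF assms] by (auto simp: host_growth_def)
  also have "\<dots> \<longleftrightarrow> b_x * (K - x - y) = K * (u_x + \<beta> * y)"
    using \<phi>_pos K_pos by (auto simp: host_denom_minus_numerator)
  finally show ?thesis .
qed

lemma parasite_growth_less_1_iff:
  assumes "0 \<le> x" "0 \<le> y"
  shows "parasite_growth (x, y) < 1 \<longleftrightarrow> b_y * (K - x - y) + \<beta> * x * K < u_y * K"
proof -
  have "parasite_growth (x, y) < 1 \<longleftrightarrow>
          0 < parasite_denom (x, y) - (1 + h * b_y + h * \<beta> * x)"
    using denoms_pos[OF assms] by (simp add: parasite_growth_def divide_less_eq_1_pos)
  also have "\<dots> \<longleftrightarrow> b_y * (K - x - y) + \<beta> * x * K < u_y * K"
    using h_pos K_pos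
    by (simp add: parasite_denom_minus_numerator zero_less_divide_iff zero_less_mult_iff)
  finally show ?thesis .
qed

lemma parasite_growth_eq_1_iff:
  assumes "0 \<le> x" "0 \<le> y"
  shows "parasite_growth (x, y) = 1 \<longleftrightarrow> b_y * (K - x - y) + \<beta> * x * K = u_y * K"
proof -
  have "parasite_growth (x, y) = 1 \<longleftrightarrow>
          parasite_denom (x, y) - (1 + h * b_y + h * \<beta> * x) = 0"
    using denoms_pos[OF assms] by (auto simp: parasite_growth_def)
  also have "\<dots> \<longleftrightarrow> b_y * (K - x - y) + \<beta> * x * K = u_y * K"
    using h_pos K_pos by (auto simp: parasite_denom_minus_numerator)
  finally show ?thesis .
qed

lemma hp_map_has_derivative:
  assumes "0 \<le> x" "0 \<le> y"
  shows "(F has_derivative linear2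
     (host_growth (x, y) * (1 - x * \<phi> * b_x / (K * host_denom (x, y))))
     (- x * host_growth (x, y) * \<phi> * (b_x / K + \<beta>) / host_denom (x, y))
     (y * h * (\<beta> - parasite_growth (x, y) * b_y / K) / parasite_denom (x, y))
     (parasite_growth (x, y) * (1 - y * h * b_y / (K * parasite_denom (x, y))))) (at (x, y))"
proof -
  have "host_growth = (\<lambda>(x, y). (1 + \<phi> * b_x + 0 * x + 0 * y) /
                        (1 + \<phi> * u_x + \<phi> * b_x / K * x + \<phi> * (b_x / K + \<beta>) * y))"
    by (simp add: fun_eq_iff host_growth_def host_denom_def)
  with linear_fractional_has_derivative[where p = "1 + \<phi> * b_x" and px = 0 and py = 0
      and q = "1 + \<phi> * u_x" and qx = "\<phi> * b_x / K" and qy = "\<phi> * (b_x / K + \<beta>)"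
      and x = x and y = y]
  have host: "(host_growth has_derivative (\<lambda>(dx, dy).
      (0 - host_growth (x, y) * (\<phi> * b_x / K)) / host_denom (x, y) * dx +
      (0 - host_growth (x, y) * (\<phi> * (b_x / K + \<beta>))) / host_denom (x, y) * dy)) (at (x, y))"
    using denoms_pos[OF assms] by (simp add: host_growth_def host_denom_def)
  have "parasite_growth = (\<lambda>(x, y). (1 + h * b_y + h * \<beta> * x + 0 * y) /
                            (1 + h * u_y + h * b_y / K * x + h * b_y / K * y))"
    by (simp add: fun_eq_iff parasite_growth_def parasite_denom_def)
  with linear_fractional_has_derivative[where p = "1 + h * b_y" and px = "h * \<beta>" and py = 0
      and q = "1 + h * u_y" and qx = "h * b_y / K" and qy = "h * b_y / K" and x = x and y = y]
  have parasite: "(parasite_growth has_derivative (\<lambda>(dx, dy).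
      (h * \<beta> - parasite_growth (x, y) * (h * b_y / K)) / parasite_denom (x, y) * dx +
      (0 - parasite_growth (x, y) * (h * b_y / K)) / parasite_denom (x, y) * dy)) (at (x, y))"
    using denoms_pos[OF assms] by (simp add: parasite_growth_def parasite_denom_def)
  from kolmogorov_map_has_derivative[OF host parasite] show ?thesis
    unfolding hp_map_eq by (simp add: field_simps)
qed

lemma stable_extinction_equilibrium:
  assumes "b_x < u_x" "b_y < u_y"
  shows "stable_fixed_point F (0, 0)"
proof (rule stable_fixed_pointI)
  show "F (0, 0) = (0, 0)"
    by (simp add: hp_map_eq)
  show "(F has_derivative linear2 (host_growth (0, 0)) 0 0 (parasite_growth (0, 0))) (at (0, 0))"
    using hp_map_has_derivative[of 0 0] by simp
  have "host_growth (0, 0) < 1" "parasite_growth (0, 0) < 1"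
    using assms K_pos by (simp_all add: host_growth_less_1_iff parasite_growth_less_1_iff)
  with growths_pos[of 0 0]
  show "jury_conditions (host_growth (0, 0)) 0 0 (parasite_growth (0, 0))"
    by (intro jury_conditions_triangular) auto
qed

lemma stable_disease_free_equilibrium:
  assumes "u_x < b_x" and R0: "b_y / b_x * (u_x / u_y) + \<beta> / u_y * K * (1 - u_x / b_x) < 1"
  shows "stable_fixed_point F (K * (1 - u_x / b_x), 0)"
proof -
  define x where "x = K * (1 - u_x / b_x)"
  have "0 < x" "x < K"
    using assms(1) K_pos b_x_pos u_x_pos by (simp_all add: x_def field_simps)
  have "b_y * u_x / b_x + \<beta> * x < u_y"
    using R0 b_x_pos u_y_pos by (simp add: x_def field_simps)
  then have "K * (b_y * u_x / b_x + \<beta> * x) < K * u_y"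
    using K_pos by (intro mult_strict_left_mono)
  then have growth: "host_growth (x, 0) = 1" "parasite_growth (x, 0) < 1"
    using \<open>0 < x\<close> K_pos b_x_pos
    by (simp_all add: host_growth_eq_1_iff parasite_growth_less_1_iff x_def field_simps)
  then have "host_denom (x, 0) = 1 + \<phi> * b_x"
    using denoms_pos[of x 0] \<open>0 < x\<close> by (simp add: host_growth_def)
  define a11 where "a11 = 1 - x * (\<phi> * b_x) / (K * (1 + \<phi> * b_x))"
  have "0 < a11" "a11 < 1"
    unfolding a11_def using \<open>0 < x\<close> \<open>x < K\<close> \<phi>_pos b_x_pos
    by (simp_all add: product_ratio_bounds[of x K "\<phi> * b_x" "1 + \<phi> * b_x"])
  moreover have "0 < parasite_growth (x, 0)"
    using growths_pos[of x 0] \<open>0 < x\<close> by simp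
  moreover have "(F has_derivative linear2 a11 (- x * \<phi> * (b_x / K + \<beta>) / (1 + \<phi> * b_x))
                   0 (parasite_growth (x, 0))) (at (x, 0))"
    using hp_map_has_derivative[of x 0] \<open>0 < x\<close> growth \<open>host_denom (x, 0) = 1 + \<phi> * b_x\<close>
    by (simp add: a11_def mult.assoc)
  ultimately show ?thesis
    using growth unfolding x_def[symmetric]
    by (intro stable_fixed_pointI jury_conditions_triangular) (auto simp: hp_map_eq)
qed

lemma stable_infected_only_equilibrium:
  assumes "u_y < b_y" and invasion: "b_x * u_y / b_y < u_x + \<beta> * K * (1 - u_y / b_y)"
  shows "stable_fixed_point F (0, K * (1 - u_y / b_y))"
proof -
  define y where "y = K * (1 - u_y / b_y)"
  have "0 < y" "y < K"
    using assms(1) K_pos b_y_pos u_y_pos by (simp_all add: y_def field_simps)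
  have "b_x * u_y / b_y < u_x + \<beta> * y"
    using invasion unfolding y_def by (simp add: mult.assoc)
  then have "K * (b_x * u_y / b_y) < K * (u_x + \<beta> * y)"
    using K_pos by (intro mult_strict_left_mono)
  then have growth: "parasite_growth (0, y) = 1" "host_growth (0, y) < 1"
    using \<open>0 < y\<close> K_pos b_y_pos
    by (simp_all add: host_growth_less_1_iff parasite_growth_eq_1_iff y_def field_simps)
  then have "parasite_denom (0, y) = 1 + h * b_y"
    using denoms_pos[of 0 y] \<open>0 < y\<close> by (simp add: parasite_growth_def)
  define a22 where "a22 = 1 - y * (h * b_y) / (K * (1 + h * b_y))"
  have "0 < a22" "a22 < 1"
    unfolding a22_def using \<open>0 < y\<close> \<open>y < K\<close> h_pos b_y_pos
    by (simp_all add: product_ratio_bounds[of y K "h * b_y" "1 + h * b_y"])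
  moreover have "0 < host_growth (0, y)"
    using growths_pos[of 0 y] \<open>0 < y\<close> by simp
  moreover have "(F has_derivative linear2 (host_growth (0, y)) 0
                   (y * h * (\<beta> - b_y / K) / (1 + h * b_y)) a22) (at (0, y))"
    using hp_map_has_derivative[of 0 y] \<open>0 < y\<close> growth \<open>parasite_denom (0, y) = 1 + h * b_y\<close>
    by (simp add: a22_def mult.assoc)
  ultimately show ?thesis
    using growth unfolding y_def[symmetric]
    by (intro stable_fixed_pointI jury_conditions_triangular) (auto simp: hp_map_eq)
qed

lemma jury_conditions_endemic_jacobian:
  assumes "0 < x" "0 < y" "x + y < K"
    and parasite_equilibrium: "b_y * (K - x - y) + \<beta> * x * K = u_y * K"
    and "u_y < b_y" "b_y < \<beta> * K + b_x"
  defines "D1 \<equiv> 1 + \<phi> * b_x" and "D2 \<equiv> 1 + h * b_y + h * \<beta> * x"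
  shows "jury_conditions (1 - x * (\<phi> * b_x) / (K * D1)) (- x * \<phi> * (b_x / K + \<beta>) / D1)
           (y * h * (\<beta> - b_y / K) / D2) (1 - y * (h * b_y) / (K * D2))"
    (is "jury_conditions ?a11 ?a12 ?a21 ?a22")
proof (rule jury_conditions_positive_diagonal)
  have "0 < D1" "0 < D2"
    using assms(1) \<phi>_pos b_x_pos h_pos b_y_pos \<beta>_pos by (simp_all add: D1_def D2_def add_pos_pos)
  have "x < K" "y < K" "h * b_y < D2"
    using assms(1-3) h_pos \<beta>_pos by (simp_all add: D2_def add_pos_pos)
  then show "0 < ?a11" "0 < ?a22"
    using assms(1,2) \<phi>_pos h_pos b_x_pos b_y_pos
    by (simp_all add: product_ratio_bounds D1_def)
  define m where "m = (1 - ?a11) * (1 - ?a22) - ?a12 * ?a21"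
  have m_eq: "m = \<beta> * (\<beta> * K + b_x - b_y) * (x * \<phi>) * (y * h) / (K * D1 * D2)"
    using K_pos \<open>0 < D1\<close> \<open>0 < D2\<close> by (simp add: m_def field_simps)
  show "0 < m"
    unfolding m_eq using assms(1,2,6) \<phi>_pos h_pos \<beta>_pos K_pos \<open>0 < D1\<close> \<open>0 < D2\<close> by simp
  have "(1 - ?a11) + (1 - ?a22) - m = (b_x * (x * \<phi>) * D2 + b_y * (y * h) * D1
      - \<beta> * (\<beta> * K + b_x - b_y) * (x * \<phi>) * (y * h)) / (K * D1 * D2)"
    using K_pos \<open>0 < D1\<close> \<open>0 < D2\<close> by (simp add: m_eq field_simps)
  also have "\<dots> = (b_x * x * \<phi> + (b_y - \<phi> * (\<beta> * K * u_y)) * (y * h) + \<phi> * h *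
        (b_x * x * (b_y + \<beta> * x) + b_x * b_y * y + \<beta> * K * u_y * y
          - \<beta> * (\<beta> * K + b_x - b_y) * x * y)) / (K * D1 * D2)"
    by (simp add: D1_def D2_def algebra_simps)
  also have "0 < \<dots>"
    using endemic_polynomial_inequality[OF b_x_pos b_y_pos \<beta>_pos assms(1-3)
        parasite_equilibrium \<open>u_y < b_y\<close>]
      \<phi>_bound assms(1,2) b_x_pos \<phi>_pos h_pos K_pos \<open>0 < D1\<close> \<open>0 < D2\<close>
    by (intro divide_pos_pos add_pos_pos mult_pos_pos) auto
  finally show "m < (1 - ?a11) + (1 - ?a22)"
    by simp
qed

lemma stable_endemic_equilibrium:
  assumes "0 < x" "0 < y"
    and host_equilibrium: "b_x * (K - x - y) = K * (u_x + \<beta> * y)"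
    and parasite_equilibrium: "b_y * (K - x - y) + \<beta> * x * K = u_y * K"
    and "u_y < b_y" "b_y < \<beta> * K + b_x"
  shows "stable_fixed_point F (x, y)"
proof -
  have "0 < b_x * (K - x - y)"
    using host_equilibrium K_pos u_x_pos \<beta>_pos assms(2) by (simp add: add_pos_pos)
  then have "x + y < K"
    using b_x_pos by (simp add: zero_less_mult_iff)
  have growth: "host_growth (x, y) = 1" "parasite_growth (x, y) = 1"
    using assms by (simp_all add: host_growth_eq_1_iff parasite_growth_eq_1_iff)
  then have "host_denom (x, y) = 1 + \<phi> * b_x" "parasite_denom (x, y) = 1 + h * b_y + h * \<beta> * x"
    using denoms_pos[of x y] assms(1,2) by (simp_all add: host_growth_def parasite_growth_def)
  with hp_map_has_derivative[of x y] assms(1,2) growth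
  have "(F has_derivative linear2
          (1 - x * (\<phi> * b_x) / (K * (1 + \<phi> * b_x))) (- x * \<phi> * (b_x / K + \<beta>) / (1 + \<phi> * b_x))
          (y * h * (\<beta> - b_y / K) / (1 + h * b_y + h * \<beta> * x))
          (1 - y * (h * b_y) / (K * (1 + h * b_y + h * \<beta> * x)))) (at (x, y))"
    by (simp add: mult.assoc)
  then show ?thesis
    using growth jury_conditions_endemic_jacobian[OF assms(1,2) \<open>x + y < K\<close> parasite_equilibrium
        assms(5,6)]
    by (intro stable_fixed_pointI) (auto simp: hp_map_eq)
qed

end

theorem theorem5:
  fixes b_x b_y u_x u_y K \<beta> h :: real
  assumes pos: "b_x > 0" "b_y > 0" "u_x > 0" "u_y > 0" "K > 0" "\<beta> > 0"
    and uyx: "u_y > u_x" and bxy: "b_x \<ge> b_y"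
    and hpos: "h > 0"
  defines "Xbar \<equiv> K * (1 - u_x / b_x)"
    and "Ybar \<equiv> K * (1 - u_y / b_y)"
    and "R0 \<equiv> (b_y / b_x) * (u_x / u_y) + \<beta> / u_y * K * (1 - u_x / b_x)"
    and "XH \<equiv> (b_x * u_y - b_y * u_x - \<beta> * K * (b_y - u_y)) / (\<beta> * (\<beta> * K + b_x - b_y))"
    and "YH \<equiv> (b_y * u_x - b_x * u_y + \<beta> * K * (b_x - u_x)) / (\<beta> * (\<beta> * K + b_x - b_y))"
  shows
    "(b_x < u_x \<and> b_y < u_y \<longrightarrow> stable_fixed_point (hp_map b_x b_y u_x u_y K \<beta> h) (0, 0)) \<and>
     (b_x > u_x \<and> R0 < 1 \<longrightarrow> stable_fixed_point (hp_map b_x b_y u_x u_y K \<beta> h) (Xbar, 0)) \<and>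
     (b_y > u_y \<and> b_x * u_y / b_y < u_x + \<beta> * K * (1 - u_y / b_y)
        \<longrightarrow> stable_fixed_point (hp_map b_x b_y u_x u_y K \<beta> h) (0, Ybar)) \<and>
     (b_x > u_x \<and> b_y > u_y \<and> b_x * u_y / b_y > u_x + \<beta> * K * (1 - u_y / b_y) \<and> R0 > 1
        \<longrightarrow> stable_fixed_point (hp_map b_x b_y u_x u_y K \<beta> h) (XH, YH))"
proof (intro conjI impI; elim conjE)
  interpret nsfd_host_parasite b_x b_y u_x u_y K \<beta> h
    using pos hpos by unfold_locales
  show "stable_fixed_point F (0, 0)" if "b_x < u_x" "b_y < u_y"
    using that by (rule stable_extinction_equilibrium)
  show "stable_fixed_point F (Xbar, 0)" if "u_x < b_x" "R0 < 1"
    using that unfolding Xbar_def R0_def by (rule stable_disease_free_equilibrium)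
  show "stable_fixed_point F (0, Ybar)"
    if "u_y < b_y" "b_x * u_y / b_y < u_x + \<beta> * K * (1 - u_y / b_y)"
    using that unfolding Ybar_def by (rule stable_infected_only_equilibrium)
  show "stable_fixed_point F (XH, YH)"
    if "u_y < b_y" "u_x + \<beta> * K * (1 - u_y / b_y) < b_x * u_y / b_y" "1 < R0"
  proof (rule stable_endemic_equilibrium)
    have "0 < \<beta> * K"
      using pos by simp
    then show "b_y < \<beta> * K + b_x"
      using bxy by linarith
    with pos(6) show "b_x * (K - XH - YH) = K * (u_x + \<beta> * YH)"
      unfolding XH_def YH_def by (rule endemic_equilibrium(1))
    from pos(6) \<open>b_y < \<beta> * K + b_x\<close> show "b_y * (K - XH - YH) + \<beta> * XH * K = u_y * K"
      unfolding XH_def YH_def by (rule endemic_equilibrium(2))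
    show "0 < XH" "0 < YH"
      using endemic_equilibrium_pos[OF pos(1,2,4,6) \<open>b_y < \<beta> * K + b_x\<close> that(2,3)[unfolded R0_def]]
      unfolding XH_def YH_def by simp_all
  qed (rule that(1))
qed

end
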